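(* Let $f:\mathbb{R}^n\to\mathbb{R}$ be differentiable and strongly convex, and let $x^0\in\mathbb{R}^n$. For every $\eta>0$ there exists $\tau>0$ such that for every $x\in\mathbb{R}^n$ with $f(x)\le f(x^0)$ and $\|\nabla f(x)\|\ge\eta$ we have $$f(x-t\nabla f(x))\le f(x)-\frac{\eta^2}{2}t\quad\text{for all }t\in[0,\tau].$$
   Context: $\|\cdot\|$ is the Euclidean norm. $f$ is strongly convex with constant $\mu>0$ if $f(tx+(1-t)y)\le tf(x)+(1-t)f(y)-\frac{\mu t(1-t)}{2}\|y-x\|^2$ for all $x,y$ and $t\in[0,1]$. *)

theory Defs
  imports "HOL-Analysis.Analysis"
begin

definition strongly_convex :: "('a::real_normed_vector \<Rightarrow> real) \<Rightarrow> real \<Rightarrow> bool" where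
  "strongly_convex f \<mu> \<longleftrightarrow> \<mu> > 0 \<and>
     (\<forall>x y t. 0 \<le> t \<and> t \<le> 1 \<longrightarrow>
        f (t *\<^sub>R x + (1 - t) *\<^sub>R y)
          \<le> t * f x + (1 - t) * f y - \<mu> * t * (1 - t) / 2 * (norm (y - x))\<^sup>2)"

definition gradient :: "('a::euclidean_space \<Rightarrow> real) \<Rightarrow> 'a \<Rightarrow> 'a" where
  "gradient f x = (THE g. (f has_derivative (\<lambda>h. g \<bullet> h)) (at x))"

end

(*
  A strongly convex function has bounded sublevel sets, and a differentiable convex function
  has a continuous gradient. So the gradient is bounded and uniformly continuous on a compact
  neighbourhood of the sublevel set {f \<le> f x0}, and for all small t the gradient at
  y = x - t \<nabla>f(x) stays within \<eta>/2 of \<nabla>f(x), which forces \<nabla>f(y) \<bullet> \<nabla>f(x) \<ge> \<eta>\<^sup>2/2.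
  The gradient inequality taken at y, f(x) \<ge> f(y) + t \<nabla>f(y) \<bullet> \<nabla>f(x), then gives the
  descent.
*)
theory Submission
  imports Defs
begin

lemma gradient_eqI:
  fixes f :: "'a::euclidean_space \<Rightarrow> real"
  assumes "(f has_derivative (\<lambda>h. g \<bullet> h)) (at x)"
  shows "gradient f x = g"
  unfolding gradient_def
proof (rule the_equality)
  show "(f has_derivative (\<lambda>h. g \<bullet> h)) (at x)"
    by (fact assms)
next
  fix g' assume "(f has_derivative (\<lambda>h. g' \<bullet> h)) (at x)"
  then have "(\<lambda>h. g' \<bullet> h) = (\<lambda>h. g \<bullet> h)"
    using assms by (rule has_derivative_unique)
  then show "g' = g"
    by (metis euclidean_eqI)
qed

lemma has_derivative_gradient:
  fixes f :: "'a::euclidean_space \<Rightarrow> real"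
  assumes "f differentiable (at x)"
  shows "(f has_derivative (\<lambda>h. gradient f x \<bullet> h)) (at x)"
proof -
  obtain D where D: "(f has_derivative D) (at x)"
    using assms unfolding differentiable_def by blast
  have "D = (\<lambda>h. adjoint D 1 \<bullet> h)"
    using adjoint_works[OF has_derivative_linear[OF D], of _ 1] by (auto simp: inner_commute)
  with D show ?thesis
    using gradient_eqI by metis
qed

lemma strongly_convexD:
  assumes "strongly_convex f \<mu>" and "0 \<le> t" and "t \<le> 1"
  shows "f (t *\<^sub>R x + (1 - t) *\<^sub>R y)
           \<le> t * f x + (1 - t) * f y - \<mu> * t * (1 - t) / 2 * (norm (y - x))\<^sup>2"
  using assms by (simp add: strongly_convex_def)

lemma strongly_convex_imp_convex_on:
  fixes f :: "'a::real_normed_vector \<Rightarrow> real"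
  assumes "strongly_convex f \<mu>"
  shows "convex_on UNIV f"
proof (rule convex_onI)
  fix t :: real and x y :: 'a
  assume "0 < t" "t < 1"
  moreover have "\<mu> > 0"
    using assms by (simp add: strongly_convex_def)
  ultimately have "0 \<le> \<mu> * t * (1 - t) / 2 * (norm (x - y))\<^sup>2"
    by simp
  with strongly_convexD[OF assms, of t y x] \<open>0 < t\<close> \<open>t < 1\<close>
  show "f ((1 - t) *\<^sub>R x + t *\<^sub>R y) \<le> (1 - t) * f x + t * f y"
    by (simp add: add.commute)
qed simp

lemma convex_on_restrict_line:
  assumes "convex_on UNIV f"
  shows "convex_on UNIV (\<lambda>s::real. f (y + s *\<^sub>R v))"
proof (rule convex_onI)
  fix t a b :: real
  assume "0 < t" "t < 1"
  have "y + ((1 - t) *\<^sub>R a + t *\<^sub>R b) *\<^sub>R v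
        = (1 - t) *\<^sub>R (y + a *\<^sub>R v) + t *\<^sub>R (y + b *\<^sub>R v)"
    by (simp add: algebra_simps)
  with assms \<open>0 < t\<close> \<open>t < 1\<close>
  show "f (y + ((1 - t) *\<^sub>R a + t *\<^sub>R b) *\<^sub>R v)
          \<le> (1 - t) * f (y + a *\<^sub>R v) + t * f (y + b *\<^sub>R v)"
    by (simp add: convex_onD)
qed simp

lemma has_real_derivative_along_line:
  fixes f :: "'a::euclidean_space \<Rightarrow> real"
  assumes "f differentiable (at x)"
  shows "((\<lambda>s. f (x + s *\<^sub>R u)) has_real_derivative gradient f x \<bullet> u) (at 0)"
proof -
  have line: "((\<lambda>s. x + s *\<^sub>R u) has_derivative (\<lambda>s. s *\<^sub>R u)) (at 0)"
    by (auto intro!: derivative_eq_intros)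
  have "(f has_derivative (\<lambda>h. gradient f x \<bullet> h)) (at ((\<lambda>s. x + s *\<^sub>R u) 0))"
    using has_derivative_gradient[OF assms] by simp
  from has_derivative_compose[OF line this] show ?thesis
    unfolding has_field_derivative_def by (rule has_derivative_eq_rhs) (simp add: fun_eq_iff)
qed

lemma convex_on_gradient_inequality:
  fixes f :: "'a::euclidean_space \<Rightarrow> real"
  assumes "convex_on UNIV f" and "f differentiable (at y)"
  shows "f y + gradient f y \<bullet> (z - y) \<le> f z"
proof -
  have "(gradient f y \<bullet> (z - y)) * (1 - 0) \<le> f (y + 1 *\<^sub>R (z - y)) - f (y + 0 *\<^sub>R (z - y))"
    by (intro convex_on_imp_above_tangent[OF convex_on_restrict_line[OF assms(1)]]
        has_real_derivative_along_line[OF assms(2)]) auto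
  then show ?thesis
    by simp
qed

lemma eventually_gradient_inner_less:
  fixes f :: "'a::euclidean_space \<Rightarrow> real"
  assumes convex: "convex_on UNIV f" and diff: "\<And>x. f differentiable (at x)" and "\<epsilon> > 0"
  shows "\<forall>\<^sub>F y in at x. gradient f y \<bullet> u < gradient f x \<bullet> u + \<epsilon>"
proof -
  \<comment> \<open>\<open>\<nabla>f(y) \<bullet> u\<close> is bounded by the difference quotient \<open>q r y\<close>, which is continuous in \<open>y\<close>
     for fixed \<open>r\<close> and close to \<open>\<nabla>f(x) \<bullet> u\<close> at \<open>y = x\<close> for small \<open>r\<close>.\<close>
  define q where "q r y = (f (y + r *\<^sub>R u) - f y) / r" for r y
  have gradient_le_q: "gradient f y \<bullet> u \<le> q r y" if "r > 0" for r y
    using convex_on_gradient_inequality[OF convex diff, of y "y + r *\<^sub>R u"] that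
    by (simp add: q_def pos_le_divide_eq mult.commute)
  from has_real_derivative_along_line[OF diff]
  have "((\<lambda>r. q r x) \<longlongrightarrow> gradient f x \<bullet> u) (at 0)"
    by (simp add: has_field_derivative_iff q_def)
  then have "\<forall>\<^sub>F r in at 0. q r x < gradient f x \<bullet> u + \<epsilon> / 2"
    using \<open>\<epsilon> > 0\<close> by (intro order_tendstoD) auto
  then obtain d where "d > 0"
    and d: "\<And>r. r \<noteq> 0 \<Longrightarrow> dist r 0 < d \<Longrightarrow> q r x < gradient f x \<bullet> u + \<epsilon> / 2"
    unfolding eventually_at by blast
  define r where "r = d / 2"
  have "r > 0" and qx: "q r x < gradient f x \<bullet> u + \<epsilon> / 2"
    using \<open>d > 0\<close> d[of r] by (auto simp: r_def)
  have cont: "isCont f z" for z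
    using diff differentiable_imp_continuous_within by blast
  have "isCont (\<lambda>y. y + r *\<^sub>R u) x"
    by (intro continuous_intros)
  then have "isCont (\<lambda>y. f (y + r *\<^sub>R u)) x"
    using cont by (rule isCont_o2)
  then have "isCont (q r) x"
    unfolding q_def using cont \<open>r > 0\<close> by (intro continuous_intros) auto
  then have "\<forall>\<^sub>F y in at x. q r y < q r x + \<epsilon> / 2"
    using \<open>\<epsilon> > 0\<close> unfolding isCont_def by (intro order_tendstoD) auto
  then show ?thesis
  proof eventually_elim
    case (elim y)
    with gradient_le_q[OF \<open>r > 0\<close>, of y] qx show ?case
      by linarith
  qed
qed

lemma convex_on_continuous_gradient:
  fixes f :: "'a::euclidean_space \<Rightarrow> real"
  assumes convex: "convex_on UNIV f" and diff: "\<And>x. f differentiable (at x)"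
  shows "continuous_on S (gradient f)"
proof -
  have "(\<lambda>y. gradient f y \<bullet> i) \<midarrow>x\<rightarrow> gradient f x \<bullet> i" for x and i :: 'a
  proof (rule order_tendstoI)
    fix a assume "gradient f x \<bullet> i < a"
    then show "\<forall>\<^sub>F y in at x. gradient f y \<bullet> i < a"
      using eventually_gradient_inner_less[OF convex diff,
          where x=x and \<epsilon>="a - gradient f x \<bullet> i" and u=i]
      by simp
  next
    fix a assume "a < gradient f x \<bullet> i"
    then show "\<forall>\<^sub>F y in at x. a < gradient f y \<bullet> i"
      using eventually_gradient_inner_less[OF convex diff,
          where x=x and \<epsilon>="gradient f x \<bullet> i - a" and u="- i"]
      by simp
  qed
  then have "isCont (gradient f) x" for x
    unfolding isCont_def by (subst tendsto_componentwise_iff) blast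
  then show ?thesis
    by (simp add: continuous_at_imp_continuous_on)
qed

lemma half_square_le_inner_if_close:
  fixes a b :: "'a::real_inner"
  assumes "\<eta> \<le> norm b" and "norm (a - b) \<le> \<eta> / 2"
  shows "\<eta>\<^sup>2 / 2 \<le> a \<bullet> b"
proof -
  have "\<eta> \<ge> 0"
    using assms(2) norm_ge_zero[of "a - b"] by linarith
  have "- (norm (a - b) * norm b) \<le> (a - b) \<bullet> b"
    using Cauchy_Schwarz_ineq2[of "a - b" b] by linarith
  moreover have "norm (a - b) * norm b \<le> \<eta> / 2 * norm b"
    using assms(2) by (rule mult_right_mono) simp
  moreover have "\<eta> * (\<eta> / 2) \<le> norm b * (norm b - \<eta> / 2)"
    using assms(1) \<open>\<eta> \<ge> 0\<close> by (intro mult_mono) auto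
  moreover have "a \<bullet> b = norm b * norm b + (a - b) \<bullet> b"
    by (simp add: inner_diff_left power2_norm_eq_inner[symmetric] power2_eq_square)
  ultimately show ?thesis
    by (simp add: power2_eq_square field_simps)
qed

lemma convex_on_gradient_step_decrease:
  fixes f :: "'a::euclidean_space \<Rightarrow> real"
  assumes convex: "convex_on UNIV f" and diff: "f differentiable (at (x - t *\<^sub>R gradient f x))"
    and "t \<ge> 0" and "\<eta> \<le> norm (gradient f x)"
    and "norm (gradient f (x - t *\<^sub>R gradient f x) - gradient f x) \<le> \<eta> / 2"
  shows "f (x - t *\<^sub>R gradient f x) \<le> f x - \<eta>\<^sup>2 / 2 * t"
proof -
  define g where "g = gradient f x"
  define y where "y = x - t *\<^sub>R g"
  have "f y + t * (gradient f y \<bullet> g) \<le> f x"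
    using convex_on_gradient_inequality[OF convex diff, of x] by (simp add: y_def g_def)
  moreover have "\<eta>\<^sup>2 / 2 * t \<le> gradient f y \<bullet> g * t"
    using half_square_le_inner_if_close assms(4,5) \<open>t \<ge> 0\<close>
    by (intro mult_right_mono) (auto simp: y_def g_def)
  ultimately show ?thesis
    by (simp add: y_def g_def mult.commute)
qed

lemma convex_on_uniform_gradient_descent:
  fixes f :: "'a::euclidean_space \<Rightarrow> real"
  assumes convex: "convex_on UNIV f" and diff: "\<And>x. f differentiable (at x)"
    and "bounded S" and "\<eta> > 0"
  shows "\<exists>\<tau>>0. \<forall>x\<in>S. \<eta> \<le> norm (gradient f x) \<longrightarrow>
           (\<forall>t\<in>{0..\<tau>}. f (x - t *\<^sub>R gradient f x) \<le> f x - \<eta>\<^sup>2 / 2 * t)"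
proof -
  obtain c R where S: "S \<subseteq> cball c R"
    using \<open>bounded S\<close> bounded_subset_cball by blast
  define K where "K = cball c (R + 1)"
  have "compact K"
    by (simp add: K_def)
  have cont: "continuous_on K (gradient f)"
    by (rule convex_on_continuous_gradient[OF convex diff])
  obtain \<delta> where "\<delta> > 0" and \<delta>: "\<And>a b. a \<in> K \<Longrightarrow> b \<in> K \<Longrightarrow> dist b a < \<delta> \<Longrightarrow>
      dist (gradient f b) (gradient f a) < \<eta> / 2"
    using compact_uniformly_continuous[OF cont \<open>compact K\<close>] \<open>\<eta> > 0\<close>
    by (metis uniformly_continuous_onE half_gt_zero)
  obtain G where "G > 0" and G: "\<And>y. y \<in> K \<Longrightarrow> norm (gradient f y) \<le> G"
    using compact_continuous_image[OF cont \<open>compact K\<close>] compact_imp_bounded bounded_pos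
    by (metis imageI)
  define \<tau> where "\<tau> = min 1 \<delta> / (2 * G)"
  have "f (x - t *\<^sub>R gradient f x) \<le> f x - \<eta>\<^sup>2 / 2 * t"
    if "x \<in> S" and large: "\<eta> \<le> norm (gradient f x)" and "t \<in> {0..\<tau>}" for x t
  proof -
    let ?y = "x - t *\<^sub>R gradient f x"
    have "x \<in> K"
      using S \<open>x \<in> S\<close> by (auto simp: K_def)
    have "t * norm (gradient f x) \<le> \<tau> * G"
      using G[OF \<open>x \<in> K\<close>] \<open>t \<in> {0..\<tau>}\<close> \<open>G > 0\<close> by (intro mult_mono) auto
    also have "\<dots> = min 1 \<delta> / 2"
      using \<open>G > 0\<close> by (simp add: \<tau>_def)
    finally have step: "dist ?y x \<le> min 1 \<delta> / 2"
      using \<open>t \<in> {0..\<tau>}\<close> by (simp add: dist_norm)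
    have "dist c x \<le> R"
      using S \<open>x \<in> S\<close> by auto
    moreover have "dist x ?y \<le> 1"
      using step by (simp add: dist_commute)
    ultimately have "?y \<in> K"
      using dist_triangle[of c ?y x] by (simp add: K_def)
    moreover have "dist ?y x < \<delta>"
      using step \<open>\<delta> > 0\<close> by linarith
    ultimately have "dist (gradient f ?y) (gradient f x) < \<eta> / 2"
      by (rule \<delta>[OF \<open>x \<in> K\<close>])
    then have "norm (gradient f ?y - gradient f x) \<le> \<eta> / 2"
      by (simp add: dist_norm)
    then show ?thesis
      using convex_on_gradient_step_decrease[OF convex diff _ large] \<open>t \<in> {0..\<tau>}\<close> by simp
  qed
  moreover have "\<tau> > 0"
    using \<open>\<delta> > 0\<close> \<open>G > 0\<close> by (simp add: \<tau>_def)
  ultimately show ?thesis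
    by blast
qed

lemma strongly_convex_sublevel_bound:
  fixes f :: "'a::euclidean_space \<Rightarrow> real"
  assumes sc: "strongly_convex f \<mu>" and diff: "f differentiable (at x0)" and "f x \<le> f x0"
  shows "\<mu> * norm (x - x0) \<le> 4 * norm (gradient f x0)"
proof -
  define r where "r = norm (x - x0)"
  define G where "G = norm (gradient f x0)"
  define m where "m = (1/2) *\<^sub>R x + (1 - 1/2) *\<^sub>R x0"
  have "f m \<le> 1/2 * f x + (1 - 1/2) * f x0
              - \<mu> * (1/2) * (1 - 1/2) / 2 * (norm (x0 - x))\<^sup>2"
    unfolding m_def by (rule strongly_convexD[OF sc]) simp_all
  then have upper: "f m \<le> f x0 - \<mu> / 8 * r\<^sup>2"
    using \<open>f x \<le> f x0\<close> by (simp add: r_def norm_minus_commute)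
  have "- (G * r) \<le> gradient f x0 \<bullet> (x - x0)"
    using Cauchy_Schwarz_ineq2[of "gradient f x0" "x - x0"] by (simp add: G_def r_def)
  moreover have "m - x0 = (1/2) *\<^sub>R (x - x0)"
    by (simp add: m_def algebra_simps flip: scaleR_add_left)
  ultimately have lower: "f x0 - G * r / 2 \<le> f m"
    using convex_on_gradient_inequality[OF strongly_convex_imp_convex_on[OF sc] diff, of m] by simp
  have key: "r * (\<mu> * r) \<le> r * (4 * G)"
    using upper lower by (simp add: power2_eq_square algebra_simps)
  have "\<mu> * r \<le> 4 * G"
  proof (cases "r = 0")
    case True
    then show ?thesis
      by (simp add: G_def)
  next
    case False
    then have "r > 0"
      by (simp add: r_def)
    with key show ?thesis
      by simp
  qed
  then show ?thesis
    by (simp add: r_def G_def)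
qed

theorem proposition5:
  fixes f :: "real ^ 'n \<Rightarrow> real" and x0 :: "real ^ 'n" and \<mu> :: real
  assumes diff: "\<And>x. f differentiable (at x)"
    and sc: "strongly_convex f \<mu>"
  shows "\<forall>\<eta>>0. \<exists>\<tau>>0. \<forall>x. f x \<le> f x0 \<and> norm (gradient f x) \<ge> \<eta> \<longrightarrow>
           (\<forall>t\<in>{0..\<tau>}. f (x - t *\<^sub>R gradient f x) \<le> f x - \<eta>\<^sup>2 / 2 * t)"
proof -
  have "\<mu> > 0"
    using sc by (simp add: strongly_convex_def)
  then have "{x. f x \<le> f x0} \<subseteq> cball x0 (4 * norm (gradient f x0) / \<mu>)"
    using strongly_convex_sublevel_bound[OF sc diff]
    by (auto simp: dist_norm norm_minus_commute pos_le_divide_eq mult.commute)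
  then have "bounded {x. f x \<le> f x0}"
    by (rule bounded_subset[OF bounded_cball])
  from convex_on_uniform_gradient_descent[OF strongly_convex_imp_convex_on[OF sc] diff this]
  show ?thesis
    by blast
qed

end
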